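(* Let $m,n\ge4$ and $N=n+m-4$. Then $I_{C_N}=I_{P'_m}\times_{Q_{m,n}}I_{P_n}$, where the variable $z_S$ ($S$ a collider set of $C_N$) is identified with the variable $z_{(S\cap\{n,n+1,\dots,N,1\},\ S\cap\{2,\dots,n-1\})}$.
   Context: A DAG $\mathcal{G}$ on a vertex set $V$ has parent sets $\mathrm{pa}_{\mathcal{G}}(i)$; its characteristic imset assigns to $S\subseteq V$, $|S|\ge2$, the value $1$ if some $i\in S$ has $S\setminus\{i\}\subseteq\mathrm{pa}_{\mathcal{G}}(i)$, else $0$. A v-structure is $i\to k\leftarrow j$ with $i,j$ non-adjacent, and two DAGs are Markov equivalent iff they have the same skeleton and v-structures (equivalently the same characteristic imset). For an undirected graph $G$, $I_G$ is the kernel of the map sending a variable indexed by a Markov equivalence class with skeleton $G$ to $\prod_{S:c(S)=1}t_S$, where $c$ is the characteristic imset of any DAG in the class. $P_n$ is the path $1-2-\cdots-n$. Markov equivalence classes with skeleton $P_n$ are indexed by their collider sets $S\subseteq\{2,\dots,n-1\}$ containing no two consecutive integers (the set of $k$ with a v-structure $k-1\to k\leftarrow k+1$); $I_{P_n}\subseteq\mathbb{K}[y_S]$. $P'_m$ is the path with vertices $n-1,n,n+1,\dots,N,1,2$ in this order; its classes are indexed by sets $S'$ of interior vertices (from $n,\dots,N,1$) containing no two vertices consecutive along this path; $I_{P'_m}\subseteq\mathbb{K}[x_{S'}]$. $C_N$ is the cycle $1-2-\cdots-N-1$; its classes are indexed by nonempty $S\subseteq[N]$ with no two cyclically consecutive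 elements modulo $N$, and $I_{C_N}\subseteq\mathbb{K}[z_S]$. $Q_{m,n}$ is the set of pairs $(S',S)$ (collider sets of $P'_m$ and $P_n$) such that no two elements of $S'\cup S$ are cyclically consecutive modulo $N$, and $S'\cup S\neq\emptyset$. For $Q\subseteq R_1\times R_2$, $\phi_Q:\mathbb{K}[z_{(a,b)}:(a,b)\in Q]\to\mathbb{K}[x_a,y_b]$ is $z_{(a,b)}\mapsto x_ay_b$, and $I\times_QJ:=\phi_Q^{-1}(I+J)$. *)

theory Defs
  imports Main "HOL-Library.Poly_Mapping"
begin

type_synonym ('v,'k) mpoly = "('v \<Rightarrow>\<^sub>0 nat) \<Rightarrow>\<^sub>0 'k"

definition mvar :: "'v \<Rightarrow> ('v,'k::comm_semiring_1) mpoly" where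
  "mvar v = Poly_Mapping.single (Poly_Mapping.single v 1) 1"

definition polys_in :: "'v set \<Rightarrow> ('v,'k::zero) mpoly set" where
  "polys_in X = {p :: ('v,'k) mpoly. \<forall>m\<in>Poly_Mapping.keys p. Poly_Mapping.keys m \<subseteq> X}"

definition msubst :: "('v \<Rightarrow> ('w,'k::comm_semiring_1) mpoly) \<Rightarrow> ('v,'k) mpoly \<Rightarrow> ('w,'k) mpoly" where
  "msubst \<sigma> p = (\<Sum>m\<in>Poly_Mapping.keys p. Poly_Mapping.single 0 (Poly_Mapping.lookup p m) * (\<Prod>v\<in>Poly_Mapping.keys m. \<sigma> v ^ Poly_Mapping.lookup m v))"

definition ideal_gen :: "'a::comm_ring_1 set \<Rightarrow> 'a set" where
  "ideal_gen A = {\<Sum>a\<in>F. c a * a | F c. finite F \<and> F \<subseteq> A}"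

text \<open>A DAG on vertex set V is a set of arcs (i,j), meaning i \<rightarrow> j, without directed cycles.\<close>
definition is_dag :: "nat set \<Rightarrow> (nat \<times> nat) set \<Rightarrow> bool" where
  "is_dag V D \<longleftrightarrow> D \<subseteq> V \<times> V \<and> acyclic D"

definition pa :: "(nat \<times> nat) set \<Rightarrow> nat \<Rightarrow> nat set" where
  "pa D i = {j. (j, i) \<in> D}"

definition skel :: "(nat \<times> nat) set \<Rightarrow> nat set set" where
  "skel D = {{i, j} | i j. (i, j) \<in> D}"

definition vstruct :: "(nat \<times> nat) set \<Rightarrow> nat \<Rightarrow> nat \<Rightarrow> nat \<Rightarrow> bool" where
  "vstruct D i k j \<longleftrightarrow> (i, k) \<in> D \<and> (j, k) \<in> D \<and> i \<noteq> j \<and> (i, j) \<notin> D \<and> (j, i) \<notin> D"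

definition colliders :: "(nat \<times> nat) set \<Rightarrow> nat set" where
  "colliders D = {k. \<exists>i j. vstruct D i k j}"

definition charimset :: "(nat \<times> nat) set \<Rightarrow> nat set \<Rightarrow> bool" where
  "charimset D S \<longleftrightarrow> 2 \<le> card S \<and> (\<exists>i\<in>S. S - {i} \<subseteq> pa D i)"

text \<open>A DAG in the Markov equivalence class with skeleton E and collider set S
  (for paths and cycles the classes are indexed by collider sets).\<close>
definition class_dag :: "nat set \<Rightarrow> nat set set \<Rightarrow> nat set \<Rightarrow> (nat \<times> nat) set" where
  "class_dag V E S = (SOME D. is_dag V D \<and> skel D = E \<and> colliders D = S)"

definition imset_mono :: "nat set \<Rightarrow> nat set set \<Rightarrow> nat set \<Rightarrow> (nat set,'k::comm_semiring_1) mpoly" where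
  "imset_mono V E S = (\<Prod>T\<in>{T. T \<subseteq> V \<and> charimset (class_dag V E S) T}. mvar T)"

definition IG :: "nat set \<Rightarrow> nat set set \<Rightarrow> nat set set \<Rightarrow> (nat set,'k::field) mpoly set" where
  "IG V E C = {p \<in> polys_in C. msubst (imset_mono V E) p = 0}"

definition Pn_V :: "nat \<Rightarrow> nat set" where "Pn_V n = {1..n}"
definition Pn_E :: "nat \<Rightarrow> nat set set" where "Pn_E n = {{i, i+1} | i. 1 \<le> i \<and> i < n}"
definition Pn_C :: "nat \<Rightarrow> nat set set" where
  "Pn_C n = {S. S \<subseteq> {2..n-1} \<and> (\<forall>i. \<not> (i \<in> S \<and> i+1 \<in> S))}"

text \<open>P'_m: path n-1 - n - ... - N - 1 - 2.\<close>
definition Pp_V :: "nat \<Rightarrow> nat \<Rightarrow> nat set" where "Pp_V n N = {n-1..N} \<union> {1, 2}"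
definition Pp_E :: "nat \<Rightarrow> nat \<Rightarrow> nat set set" where
  "Pp_E n N = {{k, k+1} | k. n-1 \<le> k \<and> k < N} \<union> {{N, 1}, {1, 2}}"
definition Pp_C :: "nat \<Rightarrow> nat \<Rightarrow> nat set set" where
  "Pp_C n N = {S. S \<subseteq> {n..N} \<union> {1} \<and> (\<forall>k. n-1 \<le> k \<and> k < N \<longrightarrow> \<not> (k \<in> S \<and> k+1 \<in> S))
                 \<and> \<not> (N \<in> S \<and> 1 \<in> S) \<and> \<not> (1 \<in> S \<and> 2 \<in> S)}"

definition cyc_noncons :: "nat \<Rightarrow> nat set \<Rightarrow> bool" where
  "cyc_noncons N S \<longleftrightarrow> (\<forall>i. 1 \<le> i \<and> i < N \<longrightarrow> \<not> (i \<in> S \<and> i+1 \<in> S)) \<and> \<not> (N \<in> S \<and> 1 \<in> S)"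

definition CN_V :: "nat \<Rightarrow> nat set" where "CN_V N = {1..N}"
definition CN_E :: "nat \<Rightarrow> nat set set" where
  "CN_E N = {{i, i+1} | i. 1 \<le> i \<and> i < N} \<union> {{N, 1}}"
definition CN_C :: "nat \<Rightarrow> nat set set" where
  "CN_C N = {S. S \<noteq> {} \<and> S \<subseteq> {1..N} \<and> cyc_noncons N S}"

definition Qmn :: "nat \<Rightarrow> nat \<Rightarrow> (nat set \<times> nat set) set" where
  "Qmn n N = {(S', S). S' \<in> Pp_C n N \<and> S \<in> Pn_C n \<and> cyc_noncons N (S' \<union> S) \<and> S' \<union> S \<noteq> {}}"

text \<open>I \<times>_Q J = phi_Q^{-1}(I + J), phi_Q : K[z_q : q \<in> Q] \<rightarrow> K[x_a, y_b], z_(a,b) \<mapsto> x_a y_b.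
  Variables x_a are Inl a, y_b are Inr b; I + J is the ideal of K[x,y] generated by I and J.\<close>
definition fiber_prod :: "('a \<times> 'b) set \<Rightarrow> ('a,'k::field) mpoly set \<Rightarrow> ('b,'k) mpoly set \<Rightarrow> ('a \<times> 'b,'k) mpoly set" where
  "fiber_prod Q I J = {p \<in> polys_in Q.
     msubst (\<lambda>(a, b). mvar (Inl a) * mvar (Inr b)) p
       \<in> ideal_gen (msubst (\<lambda>a. mvar (Inl a)) ` I \<union> msubst (\<lambda>b. mvar (Inr b)) ` J)}"

end

theory Submission
  imports Defs
begin

text \<open>All three graphs are subgraphs of the cycle C_N, and on such a graph the characteristic
  imset of the class with collider set S is the indicator of E \<union> {tri k | k \<in> S}, where E is the
  edge set and tri k = {k-1, k, k+1}. So every parametrisation is a squarefree monomial map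
  S \<mapsto> t^(E + tri S). The kernel of a monomial map is spanned by its binomials, and one such map
  kills the kernel of another as soon as each row of its incidence matrix is zero or a row of the
  other's. The triples at colliders in {n..N} \<union> {1} are seen by P'_m, those in {2..n-1} by P_n,
  and the edges are shared. Hence a binomial of I_{C_N} is renamed into x^a y^b - x^a' y^b' with
  x^a - x^a' in I_{P'_m} and y^b - y^b' in I_{P_n}. Conversely x_a \<mapsto> t^(E(C_N) + tri a),
  y_b \<mapsto> t^(tri b) kills both ideals and sends x_a y_b to the image of z_{a \<union> b}, so lifting an
  element of the fibre product along (a, b) \<mapsto> a \<union> b lands in I_{C_N}.\<close>

section \<open>Substitution homomorphisms\<close>

definition monom_subst :: "('v \<Rightarrow> ('w,'k::comm_semiring_1) mpoly) \<Rightarrow> ('v \<Rightarrow>\<^sub>0 nat) \<Rightarrow> ('w,'k) mpoly" where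
  "monom_subst \<sigma> m = (\<Prod>v\<in>Poly_Mapping.keys m. \<sigma> v ^ Poly_Mapping.lookup m v)"

lemma msubst_eq_sum_monom_subst:
  "msubst \<sigma> p = (\<Sum>m\<in>Poly_Mapping.keys p. Poly_Mapping.single 0 (Poly_Mapping.lookup p m) * monom_subst \<sigma> m)"
  by (simp add: msubst_def monom_subst_def)

lemma monom_subst_superset:
  assumes "finite K" "Poly_Mapping.keys m \<subseteq> K"
  shows "monom_subst \<sigma> m = (\<Prod>v\<in>K. \<sigma> v ^ Poly_Mapping.lookup m v)"
  unfolding monom_subst_def
  by (rule prod.mono_neutral_left) (use assms in \<open>auto simp: in_keys_iff\<close>)

lemma monom_subst_zero [simp]: "monom_subst \<sigma> 0 = 1"
  by (simp add: monom_subst_def)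

lemma monom_subst_add: "monom_subst \<sigma> (a + b) = monom_subst \<sigma> a * monom_subst \<sigma> b"
proof -
  let ?K = "Poly_Mapping.keys a \<union> Poly_Mapping.keys b"
  have "monom_subst \<sigma> (a + b) = (\<Prod>v\<in>?K. \<sigma> v ^ Poly_Mapping.lookup (a + b) v)"
    by (rule monom_subst_superset) (use keys_add[of a b] in auto)
  also have "\<dots> = (\<Prod>v\<in>?K. \<sigma> v ^ Poly_Mapping.lookup a v * \<sigma> v ^ Poly_Mapping.lookup b v)"
    by (simp add: lookup_add power_add)
  also have "\<dots> = monom_subst \<sigma> a * monom_subst \<sigma> b"
    by (simp add: prod.distrib monom_subst_superset[of ?K a] monom_subst_superset[of ?K b])
  finally show ?thesis .
qed

lemma monom_subst_cong:
  "(\<And>v. v \<in> Poly_Mapping.keys m \<Longrightarrow> \<sigma> v = \<tau> v) \<Longrightarrow> monom_subst \<sigma> m = monom_subst \<tau> m"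
  by (simp add: monom_subst_def)

lemma monom_subst_mult_distrib:
  "monom_subst (\<lambda>v. \<sigma> v * \<tau> v) m = monom_subst \<sigma> m * monom_subst \<tau> m"
  by (simp add: monom_subst_def power_mult_distrib prod.distrib)

lemma msubst_superset:
  assumes "finite K" "Poly_Mapping.keys p \<subseteq> K"
  shows "msubst \<sigma> p = (\<Sum>m\<in>K. Poly_Mapping.single 0 (Poly_Mapping.lookup p m) * monom_subst \<sigma> m)"
  unfolding msubst_eq_sum_monom_subst
  by (rule sum.mono_neutral_left) (use assms in \<open>auto simp: in_keys_iff\<close>)

lemma msubst_zero [simp]: "msubst \<sigma> 0 = 0"
  by (simp add: msubst_def)

lemma msubst_add: "msubst \<sigma> (p + q) = msubst \<sigma> p + msubst \<sigma> q"
proof -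
  let ?K = "Poly_Mapping.keys p \<union> Poly_Mapping.keys q"
  show ?thesis
    using keys_add[of p q]
    by (simp add: msubst_superset[of ?K "p + q"] msubst_superset[of ?K p] msubst_superset[of ?K q]
        lookup_add single_add distrib_right sum.distrib)
qed

lemma msubst_single: "msubst \<sigma> (Poly_Mapping.single m c) = Poly_Mapping.single 0 c * monom_subst \<sigma> m"
  by (simp add: msubst_eq_sum_monom_subst)

lemma msubst_sum: "msubst \<sigma> (\<Sum>i\<in>I. f i) = (\<Sum>i\<in>I. msubst \<sigma> (f i))"
  by (induction I rule: infinite_finite_induct) (simp_all add: msubst_add)

lemma poly_mapping_sum_single:
  "p = (\<Sum>m\<in>Poly_Mapping.keys p. Poly_Mapping.single m (Poly_Mapping.lookup p m))"
proof (rule poly_mapping_eqI)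
  fix k
  have "Poly_Mapping.lookup (\<Sum>m\<in>Poly_Mapping.keys p. Poly_Mapping.single m (Poly_Mapping.lookup p m)) k
      = (\<Sum>m\<in>Poly_Mapping.keys p. (Poly_Mapping.lookup p m when m = k))"
    by (simp add: lookup_sum lookup_single)
  also have "\<dots> = Poly_Mapping.lookup p k"
    by (cases "k \<in> Poly_Mapping.keys p") (auto simp: when_def in_keys_iff sum.delta)
  finally show "Poly_Mapping.lookup p k
      = Poly_Mapping.lookup (\<Sum>m\<in>Poly_Mapping.keys p. Poly_Mapping.single m (Poly_Mapping.lookup p m)) k"
    by simp
qed

lemma msubst_mult: "msubst \<sigma> (p * q) = msubst \<sigma> p * msubst \<sigma> q"
proof -
  have "p * q = (\<Sum>a\<in>Poly_Mapping.keys p. \<Sum>b\<in>Poly_Mapping.keys q.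
          Poly_Mapping.single a (Poly_Mapping.lookup p a) * Poly_Mapping.single b (Poly_Mapping.lookup q b))"
    by (subst poly_mapping_sum_single[of p], subst poly_mapping_sum_single[of q]) (simp add: sum_product)
  then have "msubst \<sigma> (p * q) = (\<Sum>a\<in>Poly_Mapping.keys p. \<Sum>b\<in>Poly_Mapping.keys q.
          (Poly_Mapping.single 0 (Poly_Mapping.lookup p a) * monom_subst \<sigma> a) *
          (Poly_Mapping.single 0 (Poly_Mapping.lookup q b) * monom_subst \<sigma> b))"
    by (simp add: msubst_sum mult_single msubst_single monom_subst_add mult_ac)
  also have "\<dots> = msubst \<sigma> p * msubst \<sigma> q"
    by (simp add: msubst_eq_sum_monom_subst sum_product)
  finally show ?thesis .
qed

lemma msubst_one [simp]: "msubst \<sigma> 1 = 1"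
  by (metis msubst_single monom_subst_zero mult.right_neutral single_one)

lemma msubst_const [simp]: "msubst \<sigma> (Poly_Mapping.single 0 c) = Poly_Mapping.single 0 c"
  by (simp add: msubst_single)

lemma msubst_uminus: "msubst \<sigma> (- p) = - msubst \<sigma> (p :: ('v,'k::comm_ring_1) mpoly)"
  by (metis add.right_inverse add_eq_0_iff msubst_add msubst_zero)

lemma msubst_diff: "msubst \<sigma> (p - q) = msubst \<sigma> p - msubst \<sigma> (q :: ('v,'k::comm_ring_1) mpoly)"
  by (metis diff_conv_add_uminus msubst_add msubst_uminus)

lemma msubst_power: "msubst \<sigma> (p ^ k) = msubst \<sigma> p ^ k"
  by (induction k) (simp_all add: msubst_mult)

lemma msubst_prod: "msubst \<sigma> (\<Prod>i\<in>I. f i) = (\<Prod>i\<in>I. msubst \<sigma> (f i))"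
  by (induction I rule: infinite_finite_induct) (simp_all add: msubst_mult)

lemma msubst_mvar [simp]: "msubst \<sigma> (mvar v) = \<sigma> v"
  by (simp add: mvar_def msubst_single monom_subst_def)

lemma msubst_monom_subst: "msubst \<sigma> (monom_subst \<tau> m) = monom_subst (\<lambda>v. msubst \<sigma> (\<tau> v)) m"
  by (simp add: monom_subst_def msubst_prod msubst_power)

lemma msubst_msubst: "msubst \<sigma> (msubst \<tau> p) = msubst (\<lambda>v. msubst \<sigma> (\<tau> v)) p"
  by (simp add: msubst_eq_sum_monom_subst[of \<tau>] msubst_eq_sum_monom_subst[of "\<lambda>v. msubst \<sigma> (\<tau> v)"]
      msubst_sum msubst_mult msubst_monom_subst)

lemma msubst_cong:
  "(\<And>m v. m \<in> Poly_Mapping.keys p \<Longrightarrow> v \<in> Poly_Mapping.keys m \<Longrightarrow> \<sigma> v = \<tau> v) \<Longrightarrow> msubst \<sigma> p = msubst \<tau> p"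
  unfolding msubst_eq_sum_monom_subst by (intro sum.cong refl arg_cong2[where f="(*)"] monom_subst_cong) auto

lemma msubst_binomial:
  "msubst \<sigma> (Poly_Mapping.single 0 c * (Poly_Mapping.single m 1 - Poly_Mapping.single m' 1))
     = Poly_Mapping.single 0 c * (monom_subst \<sigma> m - monom_subst \<sigma> m' :: ('w,'k::comm_ring_1) mpoly)"
  by (simp add: msubst_mult msubst_diff msubst_single)

lemma prod_single_one:
  "(\<Prod>x\<in>A. Poly_Mapping.single (f x) (1::'k::comm_semiring_1)) = Poly_Mapping.single (\<Sum>x\<in>A. f x) 1"
  by (induction A rule: infinite_finite_induct) (simp_all add: mult_single)

lemma single_one_power:
  "Poly_Mapping.single e (1::'k::comm_semiring_1) ^ k = Poly_Mapping.single (\<Sum>i<k. e) 1"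
  by (induction k) (simp_all add: mult_single add.commute)

lemma single_one_eq_iff [simp]:
  "Poly_Mapping.single a (1::'k::comm_semiring_1) = Poly_Mapping.single b 1 \<longleftrightarrow> a = b"
  by (metis lookup_single_eq lookup_single_not_eq zero_neq_one)

lemma monom_subst_monomial:
  assumes "\<And>v. v \<in> Poly_Mapping.keys m \<Longrightarrow> \<sigma> v = Poly_Mapping.single (e v) (1::'k::comm_semiring_1)"
  shows "monom_subst \<sigma> m
           = Poly_Mapping.single (\<Sum>v\<in>Poly_Mapping.keys m. \<Sum>i<Poly_Mapping.lookup m v. e v) 1"
proof -
  have "monom_subst \<sigma> m
      = (\<Prod>v\<in>Poly_Mapping.keys m. Poly_Mapping.single (e v) (1::'k) ^ Poly_Mapping.lookup m v)"
    unfolding monom_subst_def by (rule prod.cong) (simp_all add: assms)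
  then show ?thesis
    by (simp add: single_one_power prod_single_one)
qed

lemma lookup_sum_replicate:
  "Poly_Mapping.lookup (\<Sum>v\<in>K. \<Sum>i<k v. (e v :: 'w \<Rightarrow>\<^sub>0 nat)) T = (\<Sum>v\<in>K. k v * Poly_Mapping.lookup (e v) T)"
  unfolding lookup_sum by (intro sum.cong refl) simp

lemma msubst_mvar_eq [simp]: "msubst mvar p = (p :: ('v, 'k::comm_semiring_1) mpoly)"
proof -
  have "monom_subst mvar m = Poly_Mapping.single m (1::'k)" for m :: "'v \<Rightarrow>\<^sub>0 nat"
  proof -
    have "(\<Sum>v\<in>Poly_Mapping.keys m. \<Sum>i<Poly_Mapping.lookup m v. Poly_Mapping.single v (1::nat)) = m"
    proof (rule poly_mapping_eqI)
      fix T
      have "(\<Sum>v\<in>Poly_Mapping.keys m. Poly_Mapping.lookup m v * Poly_Mapping.lookup (Poly_Mapping.single v (1::nat)) T)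
          = Poly_Mapping.lookup m T"
        by (simp add: lookup_single when_def sum.delta in_keys_iff if_distrib cong: if_cong)
      then show "Poly_Mapping.lookup (\<Sum>v\<in>Poly_Mapping.keys m. \<Sum>i<Poly_Mapping.lookup m v. Poly_Mapping.single v (1::nat)) T
          = Poly_Mapping.lookup m T"
        by (simp only: lookup_sum_replicate)
    qed
    moreover have "monom_subst mvar m = Poly_Mapping.single
        (\<Sum>v\<in>Poly_Mapping.keys m. \<Sum>i<Poly_Mapping.lookup m v. Poly_Mapping.single v 1) (1::'k)"
      by (rule monom_subst_monomial) (simp add: mvar_def)
    ultimately show ?thesis by simp
  qed
  then have "msubst mvar p = (\<Sum>m\<in>Poly_Mapping.keys p. Poly_Mapping.single m (Poly_Mapping.lookup p m))"
    unfolding msubst_eq_sum_monom_subst by (intro sum.cong refl) (simp add: mult_single)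
  then show ?thesis
    using poly_mapping_sum_single[of p] by simp
qed

lemma polys_in_zero [simp]: "0 \<in> polys_in X"
  by (simp add: polys_in_def)

lemma polys_in_const: "Poly_Mapping.single 0 c \<in> polys_in X"
  by (simp add: polys_in_def)

lemma polys_in_one: "1 \<in> polys_in X"
  by (metis polys_in_const single_one)

lemma polys_in_add: "p \<in> polys_in X \<Longrightarrow> q \<in> polys_in X \<Longrightarrow> p + q \<in> polys_in X"
  using keys_add[of p q] unfolding polys_in_def by blast

lemma polys_in_mult: "p \<in> polys_in X \<Longrightarrow> q \<in> polys_in X \<Longrightarrow> p * q \<in> polys_in X"
  unfolding polys_in_def
proof safe
  fix m v
  assume p: "\<forall>m\<in>Poly_Mapping.keys p. Poly_Mapping.keys m \<subseteq> X"
    and q: "\<forall>m\<in>Poly_Mapping.keys q. Poly_Mapping.keys m \<subseteq> X"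
    and m: "m \<in> Poly_Mapping.keys (p * q)" and v: "v \<in> Poly_Mapping.keys m"
  obtain a b where "m = a + b" "a \<in> Poly_Mapping.keys p" "b \<in> Poly_Mapping.keys q"
    using keys_mult m by blast
  then show "v \<in> X"
    using p q v keys_add[of a b] by blast
qed

lemma polys_in_uminus: "p \<in> polys_in X \<Longrightarrow> - p \<in> polys_in X"
  by (simp add: polys_in_def)

lemma polys_in_diff:
  "p \<in> polys_in X \<Longrightarrow> q \<in> polys_in X \<Longrightarrow> p - q \<in> polys_in X" for p q :: "('v,'k::comm_ring_1) mpoly"
  unfolding diff_conv_add_uminus by (intro polys_in_add polys_in_uminus)

lemma polys_in_power: "p \<in> polys_in X \<Longrightarrow> p ^ k \<in> polys_in X"
  by (induction k) (simp_all add: polys_in_one polys_in_mult)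

lemma polys_in_prod: "(\<And>i. i \<in> I \<Longrightarrow> f i \<in> polys_in X) \<Longrightarrow> (\<Prod>i\<in>I. f i) \<in> polys_in X"
  by (induction I rule: infinite_finite_induct) (simp_all add: polys_in_one polys_in_mult)

lemma polys_in_sum: "(\<And>i. i \<in> I \<Longrightarrow> f i \<in> polys_in X) \<Longrightarrow> (\<Sum>i\<in>I. f i) \<in> polys_in X"
  by (induction I rule: infinite_finite_induct) (simp_all add: polys_in_add)

lemma polys_in_mvar: "v \<in> X \<Longrightarrow> mvar v \<in> polys_in X"
  by (simp add: polys_in_def mvar_def)

lemma polys_in_monom_subst:
  "Poly_Mapping.keys m \<subseteq> X \<Longrightarrow> (\<And>v. v \<in> X \<Longrightarrow> \<sigma> v \<in> polys_in Y) \<Longrightarrow> monom_subst \<sigma> m \<in> polys_in Y"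
  unfolding monom_subst_def by (intro polys_in_prod polys_in_power) auto

lemma polys_in_msubst:
  "p \<in> polys_in X \<Longrightarrow> (\<And>v. v \<in> X \<Longrightarrow> \<sigma> v \<in> polys_in Y) \<Longrightarrow> msubst \<sigma> p \<in> polys_in Y"
  unfolding msubst_eq_sum_monom_subst
  by (intro polys_in_sum polys_in_mult polys_in_const polys_in_monom_subst) (auto simp: polys_in_def, blast)

lemma ideal_gen_zero: "0 \<in> ideal_gen A"
  unfolding ideal_gen_def by (rule CollectI, rule exI[of _ "{}"]) auto

lemma ideal_gen_base: "a \<in> A \<Longrightarrow> a \<in> ideal_gen A"
  unfolding ideal_gen_def by (rule CollectI, rule exI[of _ "{a}"], rule exI[of _ "\<lambda>_. 1"]) auto

lemma ideal_gen_mult: "x \<in> ideal_gen A \<Longrightarrow> r * x \<in> ideal_gen A"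
proof -
  assume "x \<in> ideal_gen A"
  then obtain F c where x: "x = (\<Sum>a\<in>F. c a * a)" "finite F" "F \<subseteq> A"
    unfolding ideal_gen_def by blast
  have "r * x = (\<Sum>a\<in>F. (r * c a) * a)"
    by (simp add: x sum_distrib_left mult.assoc)
  then show ?thesis
    unfolding ideal_gen_def using x by (intro CollectI exI[of _ F] exI[of _ "\<lambda>a. r * c a"]) auto
qed

lemma ideal_gen_add: "x \<in> ideal_gen A \<Longrightarrow> y \<in> ideal_gen A \<Longrightarrow> x + y \<in> ideal_gen A"
proof -
  assume "x \<in> ideal_gen A" "y \<in> ideal_gen A"
  then obtain F c G d where x: "x = (\<Sum>a\<in>F. c a * a)" "finite F" "F \<subseteq> A"
    and y: "y = (\<Sum>a\<in>G. d a * a)" "finite G" "G \<subseteq> A"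
    unfolding ideal_gen_def by blast
  define e where "e a = (if a \<in> F then c a else 0) + (if a \<in> G then d a else 0)" for a
  have "(\<Sum>a\<in>F \<union> G. e a * a)
      = (\<Sum>a\<in>F \<union> G. (if a \<in> F then c a * a else 0)) + (\<Sum>a\<in>F \<union> G. (if a \<in> G then d a * a else 0))"
    unfolding sum.distrib[symmetric] by (intro sum.cong refl) (simp add: e_def distrib_right)
  also have "\<dots> = x + y"
    using x y by (simp add: sum.If_cases Int_absorb1)
  finally show ?thesis
    unfolding ideal_gen_def using x y by (intro CollectI exI[of _ "F \<union> G"] exI[of _ e]) auto
qed

lemma ideal_gen_mult_diff:
  assumes "a - a' \<in> ideal_gen A" "b - b' \<in> ideal_gen A"
  shows "a * b - a' * b' \<in> ideal_gen A"
proof -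
  have "a * b - a' * b' = a * (b - b') + b' * (a - a')"
    by (simp add: algebra_simps)
  then show ?thesis
    using assms by (simp add: ideal_gen_add ideal_gen_mult)
qed

lemma msubst_ideal_gen_eq_0:
  assumes "\<And>a. a \<in> A \<Longrightarrow> msubst \<theta> a = 0" "x \<in> ideal_gen A"
  shows "msubst \<theta> x = 0"
proof -
  obtain F c where "x = (\<Sum>a\<in>F. c a * a)" "F \<subseteq> A"
    using assms(2) unfolding ideal_gen_def by blast
  then show ?thesis
    using assms(1) by (auto simp: msubst_sum msubst_mult intro!: sum.neutral)
qed

section \<open>Kernels of monomial maps\<close>

lemma monom_subst_is_monomial:
  assumes "\<And>v. v \<in> Poly_Mapping.keys m \<Longrightarrow> \<exists>e. \<sigma> v = Poly_Mapping.single e (1::'k::comm_semiring_1)"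
  shows "\<exists>e. monom_subst \<sigma> m = Poly_Mapping.single e 1"
proof -
  obtain e where "\<And>v. v \<in> Poly_Mapping.keys m \<Longrightarrow> \<sigma> v = Poly_Mapping.single (e v) 1"
    using assms by metis
  then show ?thesis
    using monom_subst_monomial by blast
qed

lemma monomial_kernel_collision:
  fixes \<sigma> :: "'v \<Rightarrow> ('w,'k::comm_ring_1) mpoly"
  assumes mon: "\<And>m. m \<in> Poly_Mapping.keys p \<Longrightarrow> \<exists>e. monom_subst \<sigma> m = Poly_Mapping.single e 1"
    and ker: "msubst \<sigma> p = 0" and m0: "m0 \<in> Poly_Mapping.keys p"
  shows "\<exists>m'\<in>Poly_Mapping.keys p. m' \<noteq> m0 \<and> monom_subst \<sigma> m' = monom_subst \<sigma> m0"
proof (rule ccontr)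
  assume none: "\<not> ?thesis"
  obtain E where E: "\<And>m. m \<in> Poly_Mapping.keys p \<Longrightarrow> monom_subst \<sigma> m = Poly_Mapping.single (E m) 1"
    using mon by metis
  have "Poly_Mapping.lookup (msubst \<sigma> p) (E m0)
      = (\<Sum>m\<in>Poly_Mapping.keys p. (Poly_Mapping.lookup p m when E m = E m0))"
    unfolding msubst_eq_sum_monom_subst lookup_sum
    by (intro sum.cong refl) (simp add: E mult_single lookup_single)
  also have "\<dots> = Poly_Mapping.lookup p m0"
    using none m0 E by (subst sum.remove[OF finite_keys m0]) (auto simp: when_def intro!: sum.neutral)
  finally show False
    using ker m0 by (simp add: in_keys_iff)
qed

lemma keys_cancel_binomial:
  fixes p :: "('v,'k::comm_ring_1) mpoly"
  assumes "m' \<in> Poly_Mapping.keys p" "m' \<noteq> m0"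
  shows "Poly_Mapping.keys (p - Poly_Mapping.single 0 (Poly_Mapping.lookup p m0)
           * (Poly_Mapping.single m0 1 - Poly_Mapping.single m' 1)) \<subseteq> Poly_Mapping.keys p - {m0}"
proof -
  let ?c = "Poly_Mapping.lookup p m0"
  have "Poly_Mapping.single 0 ?c * (Poly_Mapping.single m0 1 - Poly_Mapping.single m' 1)
      = Poly_Mapping.single m0 ?c - Poly_Mapping.single m' ?c"
    by (simp add: right_diff_distrib mult_single)
  then have "Poly_Mapping.lookup (p - Poly_Mapping.single 0 ?c * (Poly_Mapping.single m0 1 - Poly_Mapping.single m' 1)) k
      = Poly_Mapping.lookup p k - (?c when m0 = k) + (?c when m' = k)" for k
    by (simp add: lookup_minus lookup_single)
  then show ?thesis
    using assms by (auto simp: in_keys_iff when_def split: if_splits)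
qed

text \<open>The kernel of a monomial map is spanned by the binomials it contains: induction on the
  number of terms, cancelling one term against a colliding one.\<close>

lemma monomial_kernel_induct:
  fixes \<sigma> :: "'v \<Rightarrow> ('w,'k::comm_ring_1) mpoly"
  assumes mon: "\<And>v. v \<in> X \<Longrightarrow> \<exists>e. \<sigma> v = Poly_Mapping.single e 1"
    and p: "p \<in> polys_in X" "msubst \<sigma> p = 0"
    and zero: "P 0" and add: "\<And>a b. P a \<Longrightarrow> P b \<Longrightarrow> P (a + b)"
    and binomial: "\<And>c m m'. Poly_Mapping.keys m \<subseteq> X \<Longrightarrow> Poly_Mapping.keys m' \<subseteq> X \<Longrightarrow>
       monom_subst \<sigma> m = monom_subst \<sigma> m' \<Longrightarrow>
       P (Poly_Mapping.single 0 c * (Poly_Mapping.single m 1 - Poly_Mapping.single m' 1))"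
  shows "P p"
  using p
proof (induction "card (Poly_Mapping.keys p)" arbitrary: p rule: less_induct)
  case less
  show ?case
  proof (cases "p = 0")
    case True
    then show ?thesis using zero by simp
  next
    case False
    then obtain m0 where m0: "m0 \<in> Poly_Mapping.keys p" by fastforce
    have keys_X: "Poly_Mapping.keys m \<subseteq> X" if "m \<in> Poly_Mapping.keys p" for m
      using less.prems(1) that by (auto simp: polys_in_def)
    have "\<exists>e. monom_subst \<sigma> m = Poly_Mapping.single e 1" if "m \<in> Poly_Mapping.keys p" for m
      using keys_X[OF that] mon by (intro monom_subst_is_monomial) blast
    then obtain m' where m': "m' \<in> Poly_Mapping.keys p" "m' \<noteq> m0" "monom_subst \<sigma> m' = monom_subst \<sigma> m0"
      using monomial_kernel_collision[OF _ less.prems(2) m0] by blast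
    define b where "b = Poly_Mapping.single 0 (Poly_Mapping.lookup p m0)
      * (Poly_Mapping.single m0 1 - Poly_Mapping.single m' 1)"
    have keys_less: "Poly_Mapping.keys (p - b) \<subseteq> Poly_Mapping.keys p - {m0}"
      unfolding b_def using m'(1,2) by (rule keys_cancel_binomial)
    have "P (p - b)"
    proof (rule less.hyps)
      show "card (Poly_Mapping.keys (p - b)) < card (Poly_Mapping.keys p)"
        using keys_less m0 by (intro psubset_card_mono) auto
      show "p - b \<in> polys_in X"
        using keys_less less.prems(1) by (auto simp: polys_in_def)
      show "msubst \<sigma> (p - b) = 0"
        using less.prems(2) m' by (simp add: b_def msubst_diff msubst_binomial)
    qed
    moreover have "P b"
      unfolding b_def using keys_X m0 m' by (intro binomial) auto
    ultimately have "P (p - b + b)"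
      by (rule add)
    then show ?thesis
      by simp
  qed
qed

lemma msubst_monomial_kernel_into_ideal:
  fixes \<sigma> :: "'v \<Rightarrow> ('w,'k::comm_ring_1) mpoly"
  assumes mon: "\<And>v. v \<in> X \<Longrightarrow> \<exists>e. \<sigma> v = Poly_Mapping.single e 1"
    and binomial: "\<And>m m'. Poly_Mapping.keys m \<subseteq> X \<Longrightarrow> Poly_Mapping.keys m' \<subseteq> X \<Longrightarrow>
       monom_subst \<sigma> m = monom_subst \<sigma> m' \<Longrightarrow> monom_subst \<tau> m - monom_subst \<tau> m' \<in> ideal_gen A"
    and p: "p \<in> polys_in X" "msubst \<sigma> p = 0"
  shows "msubst \<tau> p \<in> ideal_gen A"
proof (rule monomial_kernel_induct[OF mon p, where P = "\<lambda>q. msubst \<tau> q \<in> ideal_gen A"])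
  fix c m m'
  assume "Poly_Mapping.keys m \<subseteq> X" "Poly_Mapping.keys m' \<subseteq> X" "monom_subst \<sigma> m = monom_subst \<sigma> m'"
  then have "monom_subst \<tau> m - monom_subst \<tau> m' \<in> ideal_gen A"
    by (rule binomial)
  then show "msubst \<tau> (Poly_Mapping.single 0 c * (Poly_Mapping.single m 1 - Poly_Mapping.single m' 1))
      \<in> ideal_gen A"
    by (simp add: msubst_binomial ideal_gen_mult)
qed (simp_all add: ideal_gen_zero ideal_gen_add msubst_add)

lemma msubst_monomial_kernel_subset:
  fixes \<sigma> :: "'v \<Rightarrow> ('w,'k::comm_ring_1) mpoly"
  assumes mon: "\<And>v. v \<in> X \<Longrightarrow> \<exists>e. \<sigma> v = Poly_Mapping.single e 1"
    and binomial: "\<And>m m'. Poly_Mapping.keys m \<subseteq> X \<Longrightarrow> Poly_Mapping.keys m' \<subseteq> X \<Longrightarrow>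
       monom_subst \<sigma> m = monom_subst \<sigma> m' \<Longrightarrow> monom_subst \<tau> m = monom_subst \<tau> m'"
    and p: "p \<in> polys_in X" "msubst \<sigma> p = 0"
  shows "msubst \<tau> p = 0"
proof (rule monomial_kernel_induct[OF mon p, where P = "\<lambda>q. msubst \<tau> q = 0"])
  fix c m m'
  assume "Poly_Mapping.keys m \<subseteq> X" "Poly_Mapping.keys m' \<subseteq> X" "monom_subst \<sigma> m = monom_subst \<sigma> m'"
  then have "monom_subst \<tau> m = monom_subst \<tau> m'"
    by (rule binomial)
  then show "msubst \<tau> (Poly_Mapping.single 0 c * (Poly_Mapping.single m 1 - Poly_Mapping.single m' 1)) = 0"
    by (simp add: msubst_binomial)
qed (simp_all add: msubst_add)

definition set_monom :: "'w set \<Rightarrow> ('w,'k::comm_semiring_1) mpoly" where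
  "set_monom G = (\<Prod>T\<in>G. mvar T)"

lemma set_monom_eq_single:
  "set_monom G = Poly_Mapping.single (\<Sum>T\<in>G. Poly_Mapping.single T 1) (1::'k::comm_semiring_1)"
  unfolding set_monom_def mvar_def by (rule prod_single_one)

lemma set_monom_union:
  "finite G \<Longrightarrow> finite H \<Longrightarrow> G \<inter> H = {} \<Longrightarrow> set_monom (G \<union> H) = set_monom G * set_monom H"
  unfolding set_monom_def by (rule prod.union_disjoint)

lemma monom_subst_set_monom:
  assumes "Poly_Mapping.keys m \<subseteq> X"
    and "\<And>v. v \<in> X \<Longrightarrow> \<sigma> v = set_monom (G v)" "\<And>v. v \<in> X \<Longrightarrow> finite (G v)"
  shows "\<exists>\<mu>. monom_subst \<sigma> m = Poly_Mapping.single \<mu> (1::'k::comm_semiring_1) \<and>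
     (\<forall>T. Poly_Mapping.lookup \<mu> T
            = (\<Sum>v\<in>Poly_Mapping.keys m. Poly_Mapping.lookup m v * (if T \<in> G v then 1 else 0)))"
proof (intro exI conjI allI)
  show "monom_subst \<sigma> m = Poly_Mapping.single (\<Sum>v\<in>Poly_Mapping.keys m.
          \<Sum>i<Poly_Mapping.lookup m v. (\<Sum>T\<in>G v. Poly_Mapping.single T 1)) (1::'k)"
    by (rule monom_subst_monomial) (use assms in \<open>auto simp: set_monom_eq_single\<close>)
  show "Poly_Mapping.lookup (\<Sum>v\<in>Poly_Mapping.keys m. \<Sum>i<Poly_Mapping.lookup m v.
          (\<Sum>T\<in>G v. Poly_Mapping.single T (1::nat))) T
      = (\<Sum>v\<in>Poly_Mapping.keys m. Poly_Mapping.lookup m v * (if T \<in> G v then 1 else 0))" for T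
    unfolding lookup_sum_replicate
    using assms by (intro sum.cong refl) (auto simp: lookup_sum lookup_single when_def)
qed

text \<open>Read H v and G v as columns of incidence matrices: the exponent of t_T in the monomial of v
  is [T \<in> H v]. Under this condition each H-exponent vector arises from the G-exponent vector by
  selecting and zeroing coordinates, so equal G-monomials have equal H-monomials.\<close>

definition rows_among :: "'v set \<Rightarrow> ('v \<Rightarrow> 'w set) \<Rightarrow> ('v \<Rightarrow> 'u set) \<Rightarrow> bool" where
  "rows_among X H G \<longleftrightarrow>
     (\<forall>T. (\<forall>v\<in>X. T \<notin> H v) \<or> (\<exists>T'. \<forall>v\<in>X. (T \<in> H v) = (T' \<in> G v)))"

lemma monom_subst_set_monom_transfer:
  fixes \<tau> :: "'v \<Rightarrow> ('w,'k::comm_semiring_1) mpoly" and \<sigma> :: "'v \<Rightarrow> ('u,'k) mpoly"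
  assumes \<tau>: "\<And>v. v \<in> X \<Longrightarrow> \<tau> v = set_monom (H v)" "\<And>v. v \<in> X \<Longrightarrow> finite (H v)"
    and \<sigma>: "\<And>v. v \<in> X \<Longrightarrow> \<sigma> v = set_monom (G v)" "\<And>v. v \<in> X \<Longrightarrow> finite (G v)"
    and rows: "rows_among X H G"
    and keys: "Poly_Mapping.keys m \<subseteq> X" "Poly_Mapping.keys m' \<subseteq> X"
    and eq: "monom_subst \<sigma> m = monom_subst \<sigma> m'"
  shows "monom_subst \<tau> m = monom_subst \<tau> m'"
proof -
  let ?row = "\<lambda>G k T. (\<Sum>v\<in>Poly_Mapping.keys k. Poly_Mapping.lookup k v * (if T \<in> G v then 1 else 0))"
  obtain \<mu>1 \<mu>1' \<mu>2 \<mu>2' where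
      \<mu>1: "monom_subst \<tau> m = Poly_Mapping.single \<mu>1 1" "\<forall>T. Poly_Mapping.lookup \<mu>1 T = ?row H m T"
    and \<mu>1': "monom_subst \<tau> m' = Poly_Mapping.single \<mu>1' 1" "\<forall>T. Poly_Mapping.lookup \<mu>1' T = ?row H m' T"
    and \<mu>2: "monom_subst \<sigma> m = Poly_Mapping.single \<mu>2 1" "\<forall>T. Poly_Mapping.lookup \<mu>2 T = ?row G m T"
    and \<mu>2': "monom_subst \<sigma> m' = Poly_Mapping.single \<mu>2' 1" "\<forall>T. Poly_Mapping.lookup \<mu>2' T = ?row G m' T"
    using monom_subst_set_monom[of m X \<tau> H, OF keys(1) \<tau>] monom_subst_set_monom[of m' X \<tau> H, OF keys(2) \<tau>]
      monom_subst_set_monom[of m X \<sigma> G, OF keys(1) \<sigma>] monom_subst_set_monom[of m' X \<sigma> G, OF keys(2) \<sigma>]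
    by blast
  have "\<mu>2 = \<mu>2'"
    using eq \<mu>2(1) \<mu>2'(1) by simp
  have "\<mu>1 = \<mu>1'"
  proof (rule poly_mapping_eqI)
    fix T
    show "Poly_Mapping.lookup \<mu>1 T = Poly_Mapping.lookup \<mu>1' T"
    proof (cases "\<forall>v\<in>X. T \<notin> H v")
      case True
      then show ?thesis
        using keys \<mu>1(2) \<mu>1'(2) by (auto simp: subset_iff intro!: sum.neutral)
    next
      case False
      then obtain T2 where T2: "\<forall>v\<in>X. (T \<in> H v) = (T2 \<in> G v)"
        using rows unfolding rows_among_def by blast
      have "Poly_Mapping.lookup \<mu>1 T = Poly_Mapping.lookup \<mu>2 T2"
        using \<mu>1(2) \<mu>2(2) T2 keys(1) by (auto intro!: sum.cong)
      moreover have "Poly_Mapping.lookup \<mu>1' T = Poly_Mapping.lookup \<mu>2' T2"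
        using \<mu>1'(2) \<mu>2'(2) T2 keys(2) by (auto intro!: sum.cong)
      ultimately show ?thesis
        using \<open>\<mu>2 = \<mu>2'\<close> by simp
    qed
  qed
  then show ?thesis
    using \<mu>1(1) \<mu>1'(1) by simp
qed

lemma msubst_set_monom_kernel_subset:
  fixes \<tau> :: "'v \<Rightarrow> ('w,'k::comm_ring_1) mpoly" and \<sigma> :: "'v \<Rightarrow> ('u,'k) mpoly"
  assumes \<tau>: "\<And>v. v \<in> X \<Longrightarrow> \<tau> v = set_monom (H v)" "\<And>v. v \<in> X \<Longrightarrow> finite (H v)"
    and \<sigma>: "\<And>v. v \<in> X \<Longrightarrow> \<sigma> v = set_monom (G v)" "\<And>v. v \<in> X \<Longrightarrow> finite (G v)"
    and rows: "rows_among X H G"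
    and p: "p \<in> polys_in X" "msubst \<sigma> p = 0"
  shows "msubst \<tau> p = 0"
proof (rule msubst_monomial_kernel_subset[OF _ _ p])
  show "\<exists>e. \<sigma> v = Poly_Mapping.single e 1" if "v \<in> X" for v
    using \<sigma>(1)[OF that] set_monom_eq_single by metis
qed (rule monom_subst_set_monom_transfer[OF \<tau> \<sigma> rows])

section \<open>Characteristic imsets on subgraphs of the cycle\<close>

definition cyc_pred :: "nat \<Rightarrow> nat \<Rightarrow> nat" where
  "cyc_pred N k = (if k = 1 then N else k - 1)"

definition cyc_succ :: "nat \<Rightarrow> nat \<Rightarrow> nat" where
  "cyc_succ N k = (if k = N then 1 else k + 1)"

definition cyc_triple :: "nat \<Rightarrow> nat \<Rightarrow> nat set" where
  "cyc_triple N k = {cyc_pred N k, k, cyc_succ N k}"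

lemma mem_CN_E_iff: "e \<in> CN_E N \<longleftrightarrow> (\<exists>i. 1 \<le> i \<and> i < N \<and> e = {i, i + 1}) \<or> e = {N, 1}"
  by (auto simp: CN_E_def)

lemma finite_CN_E: "finite (CN_E N)"
proof (rule finite_subset)
  show "CN_E N \<subseteq> Pow {0..N + 1}"
    unfolding CN_E_def by auto
qed simp

lemma finite_cycle_family: "E \<subseteq> CN_E N \<Longrightarrow> S \<subseteq> {1..N} \<Longrightarrow> finite (E \<union> cyc_triple N ` S)"
  using finite_subset[OF _ finite_CN_E] finite_subset[of S "{1..N}"] by blast

lemma Pn_E_subset_CN_E: "n \<le> N \<Longrightarrow> Pn_E n \<subseteq> CN_E N"
  unfolding Pn_E_def CN_E_def by auto

lemma Pp_E_subset_CN_E: "4 \<le> n \<Longrightarrow> n \<le> N \<Longrightarrow> Pp_E n N \<subseteq> CN_E N"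
  unfolding Pp_E_def CN_E_def by force

context
  fixes N :: nat
  assumes N_ge_4: "4 \<le> N"
begin

lemma CN_E_eq_succ: "e \<in> CN_E N \<Longrightarrow> \<exists>i\<in>{1..N}. e = {i, cyc_succ N i}"
  using N_ge_4 unfolding mem_CN_E_iff cyc_succ_def
  by (auto intro: bexI[of _ N] simp: insert_commute)

lemma CN_E_nbr: "{a, i} \<in> CN_E N \<Longrightarrow> i \<in> {1..N} \<and> (a = cyc_pred N i \<or> a = cyc_succ N i)"
  using N_ge_4 unfolding mem_CN_E_iff cyc_pred_def cyc_succ_def by (auto simp: doubleton_eq_iff)

lemma cyc_pred_succ:
  assumes "i \<in> {1..N}"
  shows "cyc_pred N i \<noteq> cyc_succ N i" "cyc_pred N i \<noteq> i" "cyc_succ N i \<noteq> i"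
    "cyc_pred N i \<in> {1..N}" "cyc_succ N i \<in> {1..N}"
    "cyc_succ N (cyc_pred N i) = i" "cyc_pred N (cyc_succ N i) = i"
  using assms N_ge_4 unfolding cyc_pred_def cyc_succ_def by auto

lemma CN_E_pred: "i \<in> {1..N} \<Longrightarrow> {cyc_pred N i, i} \<in> CN_E N"
  using N_ge_4 unfolding mem_CN_E_iff cyc_pred_def by (cases "i = 1") (auto intro: exI[of _ "i - 1"])

lemma CN_E_succ: "i \<in> {1..N} \<Longrightarrow> {i, cyc_succ N i} \<in> CN_E N"
  unfolding mem_CN_E_iff cyc_succ_def by (cases "i = N") auto

lemma pred_succ_notin_CN_E: "i \<in> {1..N} \<Longrightarrow> {cyc_pred N i, cyc_succ N i} \<notin> CN_E N"
proof
  assume i: "i \<in> {1..N}" and "{cyc_pred N i, cyc_succ N i} \<in> CN_E N"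
  then have "cyc_pred N i = cyc_pred N (cyc_succ N i) \<or> cyc_pred N i = cyc_succ N (cyc_succ N i)"
    using CN_E_nbr by blast
  then show False
    using i N_ge_4 unfolding cyc_pred_def cyc_succ_def by (auto split: if_splits)
qed

lemma cyc_triple_notin_CN_E: "i \<in> {1..N} \<Longrightarrow> cyc_triple N i \<notin> CN_E N"
proof
  assume i: "i \<in> {1..N}" and "cyc_triple N i \<in> CN_E N"
  then obtain a b where ab: "cyc_triple N i = {a, b}"
    unfolding mem_CN_E_iff by blast
  have "cyc_pred N i \<in> {a, b}" "i \<in> {a, b}" "cyc_succ N i \<in> {a, b}"
    using ab unfolding cyc_triple_def by auto
  then show False
    using cyc_pred_succ(1-3)[OF i] by auto
qed

lemma inj_on_cyc_triple: "inj_on (cyc_triple N) {1..N}"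
proof (rule inj_onI, rule ccontr)
  fix i j
  assume i: "i \<in> {1..N}" and "j \<in> {1..N}" and eq: "cyc_triple N i = cyc_triple N j" and "i \<noteq> j"
  then have "j = cyc_pred N i \<or> j = cyc_succ N i"
    unfolding cyc_triple_def by auto
  moreover have "cyc_pred N j \<in> cyc_triple N i" "cyc_succ N j \<in> cyc_triple N i"
    using eq unfolding cyc_triple_def by auto
  ultimately show False
    using i N_ge_4 unfolding cyc_triple_def cyc_pred_def cyc_succ_def by (auto split: if_splits)
qed

end

locale cycle_subdag =
  fixes N :: nat and V :: "nat set" and D :: "(nat \<times> nat) set"
  assumes N_ge_4: "4 \<le> N" and dag: "is_dag V D" and skel_subset: "skel D \<subseteq> CN_E N"
begin

lemma arc_in_skel: "(a, b) \<in> D \<Longrightarrow> {a, b} \<in> skel D"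
  by (auto simp: skel_def)

lemma arc_within: "(a, b) \<in> D \<Longrightarrow> a \<in> V \<and> b \<in> V"
  using dag by (auto simp: is_dag_def)

lemma no_loop: "(i, i) \<notin> D"
  using dag by (auto simp: is_dag_def acyclic_def)

lemma parent_is_cycle_nbr: "(j, i) \<in> D \<Longrightarrow> i \<in> {1..N} \<and> (j = cyc_pred N i \<or> j = cyc_succ N i)"
  using arc_in_skel skel_subset CN_E_nbr[OF N_ge_4] by blast

lemma two_parents:
  "(a, i) \<in> D \<Longrightarrow> (b, i) \<in> D \<Longrightarrow> a \<noteq> b \<Longrightarrow> {a, b} = {cyc_pred N i, cyc_succ N i}"
  using parent_is_cycle_nbr[of a i] parent_is_cycle_nbr[of b i] by auto

lemma two_parents_vstruct:
  assumes "(a, i) \<in> D" "(b, i) \<in> D" "a \<noteq> b"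
  shows "vstruct D a i b"
proof -
  have "i \<in> {1..N}"
    using parent_is_cycle_nbr assms(1) by blast
  then have "{a, b} \<notin> skel D"
    using two_parents[OF assms] pred_succ_notin_CN_E[OF N_ge_4] skel_subset by auto
  then have "(a, b) \<notin> D" "(b, a) \<notin> D"
    using arc_in_skel[of a b] arc_in_skel[of b a] by (auto simp: insert_commute)
  then show ?thesis
    using assms by (simp add: vstruct_def)
qed

lemma charimset_in_skel_or_triple:
  assumes "charimset D T"
  shows "T \<in> skel D \<union> cyc_triple N ` colliders D"
proof -
  obtain i where i: "i \<in> T" and pa: "T - {i} \<subseteq> pa D i"
    using assms by (auto simp: charimset_def)
  have "\<not> T \<subseteq> {i}"
    using assms card_mono[of "{i}" T] by (auto simp: charimset_def)
  then obtain j where j: "j \<in> T" "j \<noteq> i" and ji: "(j, i) \<in> D"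
    using pa by (auto simp: pa_def)
  show ?thesis
  proof (cases "T = {j, i}")
    case True
    then show ?thesis
      using arc_in_skel[OF ji] by simp
  next
    case False
    then obtain k where k: "k \<in> T" "k \<noteq> i" "k \<noteq> j" and ki: "(k, i) \<in> D"
      using i j pa by (auto simp: pa_def)
    have "i \<in> colliders D"
      using two_parents_vstruct[OF ji ki] k(3) unfolding colliders_def by auto
    moreover have "T = cyc_triple N i"
    proof
      show "T \<subseteq> cyc_triple N i"
        using pa parent_is_cycle_nbr by (auto simp: pa_def cyc_triple_def)
      show "cyc_triple N i \<subseteq> T"
        using two_parents[OF ji ki] k(3) i j(1) k(1) by (auto simp: cyc_triple_def doubleton_eq_iff)
    qed
    ultimately show ?thesis
      by blast
  qed
qed

lemma charimset_skel: "T \<in> skel D \<Longrightarrow> T \<subseteq> V \<and> charimset D T"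
proof -
  assume "T \<in> skel D"
  then obtain x y where T: "T = {x, y}" and xy: "(x, y) \<in> D"
    unfolding skel_def by blast
  have "x \<noteq> y"
    using no_loop xy by blast
  then show ?thesis
    using T xy arc_within[OF xy] by (auto simp: charimset_def pa_def intro!: bexI[of _ y])
qed

lemma charimset_collider_triple:
  "k \<in> colliders D \<Longrightarrow> cyc_triple N k \<subseteq> V \<and> charimset D (cyc_triple N k)"
proof -
  assume "k \<in> colliders D"
  then obtain a b where a: "(a, k) \<in> D" and b: "(b, k) \<in> D" and "a \<noteq> b"
    unfolding colliders_def vstruct_def by blast
  then have T: "cyc_triple N k = {a, k, b}"
    using two_parents unfolding cyc_triple_def by (auto simp: doubleton_eq_iff)
  have "a \<noteq> k" "b \<noteq> k"
    using no_loop a b by auto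
  then show ?thesis
    unfolding T using \<open>a \<noteq> b\<close> a b arc_within[OF a] arc_within[OF b]
    by (auto simp: charimset_def pa_def intro!: bexI[of _ k])
qed

lemma charimset_sets: "{T. T \<subseteq> V \<and> charimset D T} = skel D \<union> cyc_triple N ` colliders D"
  using charimset_in_skel_or_triple charimset_skel charimset_collider_triple by blast

end

lemma imset_mono_cycle_subgraph:
  assumes "4 \<le> N" "E \<subseteq> CN_E N" "\<exists>D. is_dag V D \<and> skel D = E \<and> colliders D = S"
  shows "imset_mono V E S = set_monom (E \<union> cyc_triple N ` S)"
proof -
  let ?D = "class_dag V E S"
  have D: "is_dag V ?D" "skel ?D = E" "colliders ?D = S"
    unfolding class_dag_def using someI_ex[OF assms(3)] by blast+
  interpret cycle_subdag N V ?D
    using assms(1,2) D by unfold_locales auto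
  show ?thesis
    using charimset_sets D by (simp add: imset_mono_def set_monom_def)
qed

text \<open>Arcs then decrease the rank k \<mapsto> 0 on S and k \<mapsto> (cyclic distance from g) + 1 off S, provided the
  backward chain of arcs is cut at g: g is a collider or the edge into g from its predecessor is
  missing.\<close>

definition cyc_orient :: "nat \<Rightarrow> nat set set \<Rightarrow> nat set \<Rightarrow> (nat \<times> nat) set" where
  "cyc_orient N E S =
     {(i, cyc_succ N i) | i. i \<in> {1..N} \<and> {i, cyc_succ N i} \<in> E \<and> cyc_succ N i \<in> S} \<union>
     {(cyc_succ N i, i) | i. i \<in> {1..N} \<and> {i, cyc_succ N i} \<in> E \<and> cyc_succ N i \<notin> S}"

definition cyc_dist :: "nat \<Rightarrow> nat \<Rightarrow> nat \<Rightarrow> nat" where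
  "cyc_dist N g k = (if g \<le> k then k - g else k + N - g)"

locale cyc_orientation =
  fixes N :: nat and V :: "nat set" and E :: "nat set set" and S :: "nat set" and g :: nat
  assumes N_ge_4: "4 \<le> N" and E_subset: "E \<subseteq> CN_E N" and E_within: "\<And>e. e \<in> E \<Longrightarrow> e \<subseteq> V"
    and S_subset: "S \<subseteq> {1..N}" and S_noncons: "\<And>i. i \<in> S \<Longrightarrow> cyc_succ N i \<notin> S"
    and g: "g \<in> {1..N}" and cut: "g \<in> S \<or> {cyc_pred N g, g} \<notin> E"
    and S_edges: "\<And>k. k \<in> S \<Longrightarrow> {cyc_pred N k, k} \<in> E \<and> {k, cyc_succ N k} \<in> E"
begin

abbreviation "D \<equiv> cyc_orient N E S"

lemma arc_edge: "(a, b) \<in> D \<Longrightarrow> {a, b} \<in> E"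
  unfolding cyc_orient_def by (auto simp: insert_commute)

lemma acyclic_orient: "acyclic D"
proof -
  define r where "r k = (if k \<in> S then 0 else cyc_dist N g k + 1)" for k
  have "r b < r a" if "(a, b) \<in> D" for a b
    using that unfolding cyc_orient_def
  proof safe
    fix i
    assume "i \<in> {1..N}" "{i, cyc_succ N i} \<in> E" "cyc_succ N i \<notin> S"
    moreover have "cyc_succ N i \<noteq> g"
      using calculation cut cyc_pred_succ(7)[OF N_ge_4] by (metis insert_commute)
    ultimately show "r i < r (cyc_succ N i)"
      using g by (auto simp: r_def cyc_dist_def cyc_succ_def)
  qed (auto simp: r_def dest: S_noncons)
  then have "D\<inverse> \<subseteq> measure r"
    by auto
  then show ?thesis
    using wf_acyclic wf_measure wf_subset acyclic_converse by metis
qed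

lemma is_dag_orient: "is_dag V D"
  using acyclic_orient arc_edge E_within by (auto simp: is_dag_def)

lemma skel_orient: "skel D = E"
proof
  show "skel D \<subseteq> E"
    using arc_edge unfolding skel_def by blast
  show "E \<subseteq> skel D"
  proof
    fix e
    assume e: "e \<in> E"
    then obtain i where "i \<in> {1..N}" "e = {i, cyc_succ N i}"
      using CN_E_eq_succ[OF N_ge_4] E_subset by blast
    then show "e \<in> skel D"
      using e unfolding skel_def cyc_orient_def by (cases "cyc_succ N i \<in> S") (auto simp: insert_commute)
  qed
qed

lemma colliders_orient: "colliders D = S"
proof
  show "colliders D \<subseteq> S"
    unfolding colliders_def vstruct_def cyc_orient_def by auto
  show "S \<subseteq> colliders D"
  proof
    fix k
    assume kS: "k \<in> S"
    then have k: "k \<in> {1..N}"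
      using S_subset by auto
    note nbr = cyc_pred_succ[OF N_ge_4 k]
    have "(cyc_pred N k, k) \<in> D"
      using S_edges[OF kS] nbr kS unfolding cyc_orient_def by force
    moreover have "(cyc_succ N k, k) \<in> D"
      using S_edges[OF kS] S_noncons[OF kS] k unfolding cyc_orient_def by blast
    moreover have "(cyc_pred N k, cyc_succ N k) \<notin> D" "(cyc_succ N k, cyc_pred N k) \<notin> D"
      using arc_edge[of "cyc_pred N k" "cyc_succ N k"] arc_edge[of "cyc_succ N k" "cyc_pred N k"]
        pred_succ_notin_CN_E[OF N_ge_4 k] E_subset by (auto simp: insert_commute)
    ultimately have "vstruct D (cyc_pred N k) k (cyc_succ N k)"
      using nbr(1) by (simp add: vstruct_def)
    then show "k \<in> colliders D"
      unfolding colliders_def by blast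
  qed
qed

lemma exists_class_dag: "\<exists>D. is_dag V D \<and> skel D = E \<and> colliders D = S"
  using is_dag_orient skel_orient colliders_orient by blast

lemma imset_mono_eq: "imset_mono V E S = set_monom (E \<union> cyc_triple N ` S)"
  using imset_mono_cycle_subgraph[OF N_ge_4 E_subset exists_class_dag] .

end

lemma imset_mono_CN:
  assumes N4: "4 \<le> N" and S: "S \<in> CN_C N"
  shows "imset_mono (CN_V N) (CN_E N) S = set_monom (CN_E N \<union> cyc_triple N ` S)"
proof -
  obtain g where "g \<in> S"
    using S by (auto simp: CN_C_def)
  interpret cyc_orientation N "CN_V N" "CN_E N" S g
  proof
    show "S \<subseteq> {1..N}" "g \<in> {1..N}" "g \<in> S \<or> {cyc_pred N g, g} \<notin> CN_E N"
      using S \<open>g \<in> S\<close> by (auto simp: CN_C_def)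
    show "cyc_succ N i \<notin> S" if "i \<in> S" for i
      using S that by (auto simp: CN_C_def cyc_noncons_def cyc_succ_def)
    show "{cyc_pred N k, k} \<in> CN_E N \<and> {k, cyc_succ N k} \<in> CN_E N" if "k \<in> S" for k
      using S that CN_E_pred[OF N4] CN_E_succ[OF N4] by (auto simp: CN_C_def)
  qed (use N4 in \<open>auto simp: CN_E_def CN_V_def\<close>)
  show ?thesis
    by (rule imset_mono_eq)
qed

lemma imset_mono_Pn:
  assumes n4: "4 \<le> n" and nN: "n \<le> N" and S: "S \<in> Pn_C n"
  shows "imset_mono (Pn_V n) (Pn_E n) S = set_monom (Pn_E n \<union> cyc_triple N ` S)"
proof -
  have S_range: "k \<in> S \<Longrightarrow> 2 \<le> k \<and> k \<le> n - 1" for k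
    using S by (auto simp: Pn_C_def)
  interpret cyc_orientation N "Pn_V n" "Pn_E n" S 1
  proof
    show "4 \<le> N" "Pn_E n \<subseteq> CN_E N" "1 \<in> {1..N}"
      using n4 nN Pn_E_subset_CN_E by auto
    show "S \<subseteq> {1..N}"
      using nN by (auto dest: S_range)
    show "e \<subseteq> Pn_V n" if "e \<in> Pn_E n" for e
      using that by (auto simp: Pn_E_def Pn_V_def)
    show "cyc_succ N i \<notin> S" if "i \<in> S" for i
      using S that S_range[OF that] nN by (auto simp: Pn_C_def cyc_succ_def)
    show "1 \<in> S \<or> {cyc_pred N 1, 1} \<notin> Pn_E n"
      using n4 nN by (auto simp: Pn_E_def cyc_pred_def doubleton_eq_iff)
    show "{cyc_pred N k, k} \<in> Pn_E n \<and> {k, cyc_succ N k} \<in> Pn_E n" if "k \<in> S" for k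
    proof
      have k: "2 \<le> k" "k \<le> n - 1"
        using S_range[OF that] by auto
      then show "{cyc_pred N k, k} \<in> Pn_E n"
        unfolding Pn_E_def cyc_pred_def by (intro CollectI exI[of _ "k - 1"]) auto
      show "{k, cyc_succ N k} \<in> Pn_E n"
        using k nN unfolding Pn_E_def cyc_succ_def by auto
    qed
  qed
  show ?thesis
    by (rule imset_mono_eq)
qed

lemma imset_mono_Pp:
  assumes n4: "4 \<le> n" and nN: "n \<le> N" and S: "S \<in> Pp_C n N"
  shows "imset_mono (Pp_V n N) (Pp_E n N) S = set_monom (Pp_E n N \<union> cyc_triple N ` S)"
proof -
  have S_range: "k \<in> S \<Longrightarrow> k = 1 \<or> n \<le> k \<and> k \<le> N" for k
    using S by (auto simp: Pp_C_def)
  interpret cyc_orientation N "Pp_V n N" "Pp_E n N" S 3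
  proof
    show "4 \<le> N" "Pp_E n N \<subseteq> CN_E N" "3 \<in> {1..N}"
      using n4 nN Pp_E_subset_CN_E by auto
    show "S \<subseteq> {1..N}"
      using n4 nN S_range by (force simp: subset_iff)
    show "e \<subseteq> Pp_V n N" if "e \<in> Pp_E n N" for e
      using that n4 nN by (auto simp: Pp_E_def Pp_V_def)
    show "cyc_succ N i \<notin> S" if "i \<in> S" for i
      using S that S_range[OF that] n4 by (auto simp: Pp_C_def cyc_succ_def)
    show "3 \<in> S \<or> {cyc_pred N 3, 3} \<notin> Pp_E n N"
      using n4 nN by (auto simp: Pp_E_def cyc_pred_def doubleton_eq_iff)
    show "{cyc_pred N k, k} \<in> Pp_E n N \<and> {k, cyc_succ N k} \<in> Pp_E n N" if "k \<in> S" for k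
    proof (cases "k = 1")
      case True
      then show ?thesis
        using n4 nN by (auto simp: Pp_E_def cyc_pred_def cyc_succ_def insert_commute)
    next
      case False
      then have k: "n \<le> k" "k \<le> N"
        using S_range[OF that] by auto
      have "{cyc_pred N k, k} \<in> Pp_E n N"
        using k n4 unfolding Pp_E_def cyc_pred_def by (intro UnI1 CollectI exI[of _ "k - 1"]) auto
      moreover have "{k, cyc_succ N k} \<in> Pp_E n N"
        using k unfolding Pp_E_def cyc_succ_def by (cases "k = N") auto
      ultimately show ?thesis ..
    qed
  qed
  show ?thesis
    by (rule imset_mono_eq)
qed

section \<open>Cutting the cycle into two paths\<close>

lemma rows_among_restrict:
  assumes N4: "4 \<le> N" and E': "E' \<subseteq> CN_E N" and Y: "Y \<subseteq> {1..N}"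
    and X: "\<And>S. S \<in> X \<Longrightarrow> S \<subseteq> {1..N}"
  shows "rows_among X (\<lambda>S. E' \<union> cyc_triple N ` (S \<inter> Y)) (\<lambda>S. CN_E N \<union> cyc_triple N ` S)"
  unfolding rows_among_def
proof
  fix T
  show "(\<forall>S\<in>X. T \<notin> E' \<union> cyc_triple N ` (S \<inter> Y)) \<or>
        (\<exists>T'. \<forall>S\<in>X. (T \<in> E' \<union> cyc_triple N ` (S \<inter> Y)) = (T' \<in> CN_E N \<union> cyc_triple N ` S))"
  proof (cases "T \<in> E' \<union> cyc_triple N ` Y")
    case False
    then show ?thesis
      by blast
  next
    case True
    have "(T \<in> E' \<union> cyc_triple N ` (S \<inter> Y)) = (T \<in> CN_E N \<union> cyc_triple N ` S)" if S: "S \<in> X" for S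
    proof (cases "T \<in> E'")
      case True
      then show ?thesis
        using E' by auto
    next
      case False
      then obtain k where k: "k \<in> Y" "T = cyc_triple N k"
        using \<open>T \<in> E' \<union> cyc_triple N ` Y\<close> by blast
      then have "k \<in> {1..N}"
        using Y by auto
      then have "T \<in> cyc_triple N ` (S \<inter> Y) \<longleftrightarrow> k \<in> S" "T \<in> cyc_triple N ` S \<longleftrightarrow> k \<in> S"
        "T \<notin> CN_E N"
        using k X[OF S] inj_on_image_mem_iff[OF inj_on_cyc_triple[OF N4], of k] cyc_triple_notin_CN_E[OF N4]
        by auto
      then show ?thesis
        using False by blast
    qed
    then show ?thesis
      by blast
  qed
qed

lemma rows_among_extend:
  assumes "E' \<subseteq> CN_E N" "e \<in> E'"
  shows "rows_among X (\<lambda>S. CN_E N \<union> cyc_triple N ` S) (\<lambda>S. E' \<union> cyc_triple N ` S)"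
  unfolding rows_among_def
proof
  fix T
  show "(\<forall>S\<in>X. T \<notin> CN_E N \<union> cyc_triple N ` S) \<or>
        (\<exists>T'. \<forall>S\<in>X. (T \<in> CN_E N \<union> cyc_triple N ` S) = (T' \<in> E' \<union> cyc_triple N ` S))"
  proof (cases "T \<in> CN_E N")
    case True
    then show ?thesis
      using assms(2) by blast
  next
    case False
    then show ?thesis
      using assms(1) by blast
  qed
qed

lemma rows_among_drop:
  assumes N4: "4 \<le> N" and E': "E' \<subseteq> CN_E N" and X: "\<And>S. S \<in> X \<Longrightarrow> S \<subseteq> {1..N}"
  shows "rows_among X (\<lambda>S. cyc_triple N ` S) (\<lambda>S. E' \<union> cyc_triple N ` S)"
  unfolding rows_among_def
proof
  fix T
  show "(\<forall>S\<in>X. T \<notin> cyc_triple N ` S) \<or> (\<exists>T'. \<forall>S\<in>X. (T \<in> cyc_triple N ` S) = (T' \<in> E' \<union> cyc_triple N ` S))"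
  proof (cases "T \<in> E'")
    case True
    then have "\<forall>S\<in>X. T \<notin> cyc_triple N ` S"
      using E' X cyc_triple_notin_CN_E[OF N4] by blast
    then show ?thesis ..
  next
    case False
    then show ?thesis
      by blast
  qed
qed

lemma restricted_binomial_in_IG:
  fixes m m' :: "nat set \<Rightarrow>\<^sub>0 nat"
  assumes N4: "4 \<le> N" and E': "E' \<subseteq> CN_E N" and Y: "Y \<subseteq> {1..N}"
    and C': "\<And>S. S \<in> CN_C N \<Longrightarrow> S \<inter> Y \<in> C'"
    and imset': "\<And>S. S \<in> C' \<Longrightarrow>
      imset_mono V' E' S = (set_monom (E' \<union> cyc_triple N ` S) :: (nat set, 'k::field) mpoly)"
    and keys: "Poly_Mapping.keys m \<subseteq> CN_C N" "Poly_Mapping.keys m' \<subseteq> CN_C N"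
    and eq: "monom_subst (imset_mono (CN_V N) (CN_E N)) m
      = (monom_subst (imset_mono (CN_V N) (CN_E N)) m' :: (nat set, 'k) mpoly)"
  shows "monom_subst (\<lambda>S. mvar (S \<inter> Y)) m - monom_subst (\<lambda>S. mvar (S \<inter> Y)) m'
           \<in> (IG V' E' C' :: (nat set, 'k) mpoly set)"
proof -
  have CN_C: "S \<subseteq> {1..N}" if "S \<in> CN_C N" for S
    using that by (simp add: CN_C_def)
  have "monom_subst (\<lambda>S. imset_mono V' E' (S \<inter> Y)) m
      = monom_subst (\<lambda>S. imset_mono V' E' (S \<inter> Y) :: (nat set, 'k) mpoly) m'"
  proof (rule monom_subst_set_monom_transfer[OF _ _ _ _ rows_among_restrict[OF N4 E' Y CN_C] keys eq])
    show "imset_mono V' E' (S \<inter> Y) = (set_monom (E' \<union> cyc_triple N ` (S \<inter> Y)) :: (nat set, 'k) mpoly)"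
      if "S \<in> CN_C N" for S
      using imset'[OF C'[OF that]] .
    show "finite (E' \<union> cyc_triple N ` (S \<inter> Y))" for S
      using Y by (intro finite_cycle_family[OF E']) blast
    show "imset_mono (CN_V N) (CN_E N) S = (set_monom (CN_E N \<union> cyc_triple N ` S) :: (nat set, 'k) mpoly)"
      "finite (CN_E N \<union> cyc_triple N ` S)" if "S \<in> CN_C N" for S
      using imset_mono_CN[OF N4 that] finite_cycle_family[OF order.refl CN_C[OF that]] by auto
  qed
  moreover have polys: "monom_subst (\<lambda>S. mvar (S \<inter> Y)) k \<in> (polys_in C' :: (nat set, 'k) mpoly set)"
    if "Poly_Mapping.keys k \<subseteq> CN_C N" for k
    using that by (rule polys_in_monom_subst) (intro polys_in_mvar C')
  have "monom_subst (\<lambda>S. mvar (S \<inter> Y)) m - monom_subst (\<lambda>S. mvar (S \<inter> Y)) m'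
      \<in> (polys_in C' :: (nat set, 'k) mpoly set)"
    using polys[OF keys(1)] polys[OF keys(2)] by (rule polys_in_diff)
  ultimately show ?thesis
    unfolding IG_def by (simp add: msubst_diff msubst_monom_subst)
qed

locale cycle_cut =
  fixes n N :: nat
  assumes n_ge_4: "4 \<le> n" and n_le_N: "n \<le> N"
begin

lemma N_ge_4: "4 \<le> N"
  using n_ge_4 n_le_N by simp

lemma Pp_C_subset: "S \<in> Pp_C n N \<Longrightarrow> S \<subseteq> {1..N}"
  using n_ge_4 n_le_N unfolding Pp_C_def by (auto simp: subset_iff)

lemma Pn_C_subset: "S \<in> Pn_C n \<Longrightarrow> S \<subseteq> {1..N}"
  using n_le_N unfolding Pn_C_def by (auto simp: subset_iff)

lemma CN_C_split:
  assumes S: "S \<in> CN_C N"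
  shows "S \<inter> ({n..N} \<union> {1}) \<in> Pp_C n N" "S \<inter> {2..n-1} \<in> Pn_C n"
    "(S \<inter> ({n..N} \<union> {1}), S \<inter> {2..n-1}) \<in> Qmn n N"
proof -
  have SN: "1 \<le> x \<and> x \<le> N" if "x \<in> S" for x
    using S that by (auto simp: CN_C_def)
  have "S \<noteq> {}" and cn: "cyc_noncons N S"
    using S by (auto simp: CN_C_def)
  then have cn1: "\<not> (i \<in> S \<and> i + 1 \<in> S)" if "1 \<le> i" "i < N" for i
    using that by (auto simp: cyc_noncons_def)
  have cn2: "\<not> (N \<in> S \<and> 1 \<in> S)"
    using cn by (auto simp: cyc_noncons_def)
  show A: "S \<inter> ({n..N} \<union> {1}) \<in> Pp_C n N"
    unfolding Pp_C_def using cn1 cn2 n_ge_4 n_le_N by auto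
  have "\<not> (i \<in> S \<inter> {2..n-1} \<and> i + 1 \<in> S \<inter> {2..n-1})" for i
  proof
    assume i: "i \<in> S \<inter> {2..n-1} \<and> i + 1 \<in> S \<inter> {2..n-1}"
    then have "1 \<le> i" "i < N"
      using n_le_N by auto
    then show False
      using cn1 i by blast
  qed
  then show B: "S \<inter> {2..n-1} \<in> Pn_C n"
    unfolding Pn_C_def by blast
  have "S \<inter> ({n..N} \<union> {1}) \<union> S \<inter> {2..n-1} = S"
  proof (intro equalityI subsetI)
    fix x
    assume "x \<in> S"
    then show "x \<in> S \<inter> ({n..N} \<union> {1}) \<union> S \<inter> {2..n-1}"
      using SN[of x] by auto
  qed auto
  then show "(S \<inter> ({n..N} \<union> {1}), S \<inter> {2..n-1}) \<in> Qmn n N"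
    unfolding Qmn_def mem_Collect_eq case_prod_conv using A B cn \<open>S \<noteq> {}\<close> by simp
qed

lemma Qmn_join:
  assumes Q: "(a, b) \<in> Qmn n N"
  shows "a \<union> b \<in> CN_C N" "(a \<union> b) \<inter> ({n..N} \<union> {1}) = a" "(a \<union> b) \<inter> {2..n-1} = b" "a \<inter> b = {}"
    "a \<subseteq> {1..N}" "b \<subseteq> {1..N}"
proof -
  have a: "a \<in> Pp_C n N" and b: "b \<in> Pn_C n" and "cyc_noncons N (a \<union> b)" "a \<union> b \<noteq> {}"
    using Q by (auto simp: Qmn_def)
  then show "a \<subseteq> {1..N}" "b \<subseteq> {1..N}" "a \<union> b \<in> CN_C N"
    using Pp_C_subset Pn_C_subset n_ge_4 n_le_N by (auto simp: CN_C_def)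
  have "a \<subseteq> {n..N} \<union> {1}" "b \<subseteq> {2..n-1}"
    using a b by (auto simp: Pp_C_def Pn_C_def)
  moreover have "x \<notin> {2..n-1}" if "x \<in> {n..N} \<union> {1}" for x
    using that by auto
  ultimately show "(a \<union> b) \<inter> ({n..N} \<union> {1}) = a" "(a \<union> b) \<inter> {2..n-1} = b" "a \<inter> b = {}"
    by blast+
qed

lemma fiber_binomial_in_ideal:
  assumes keys: "Poly_Mapping.keys m \<subseteq> CN_C N" "Poly_Mapping.keys m' \<subseteq> CN_C N"
    and eq: "monom_subst (imset_mono (CN_V N) (CN_E N)) m
      = (monom_subst (imset_mono (CN_V N) (CN_E N)) m' :: (nat set, 'k::field) mpoly)"
  shows "monom_subst (\<lambda>S. mvar (Inl (S \<inter> ({n..N} \<union> {1}))) * mvar (Inr (S \<inter> {2..n-1}))) m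
       - monom_subst (\<lambda>S. mvar (Inl (S \<inter> ({n..N} \<union> {1}))) * mvar (Inr (S \<inter> {2..n-1}))) m'
       \<in> ideal_gen (msubst (\<lambda>a. mvar (Inl a)) ` IG (Pp_V n N) (Pp_E n N) (Pp_C n N)
           \<union> msubst (\<lambda>b. mvar (Inr b)) ` (IG (Pn_V n) (Pn_E n) (Pn_C n) :: (nat set, 'k) mpoly set))"
    (is "?\<chi> m - ?\<chi> m' \<in> ?Id")
proof -
  let ?\<alpha> = "\<lambda>S. mvar (S \<inter> ({n..N} \<union> {1})) :: (nat set, 'k) mpoly"
  let ?\<beta> = "\<lambda>S. mvar (S \<inter> {2..n-1}) :: (nat set, 'k) mpoly"
  have "monom_subst ?\<alpha> m - monom_subst ?\<alpha> m' \<in> IG (Pp_V n N) (Pp_E n N) (Pp_C n N)"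
    using n_ge_4 n_le_N by (intro restricted_binomial_in_IG[OF N_ge_4 Pp_E_subset_CN_E[OF n_ge_4 n_le_N] _
        CN_C_split(1) imset_mono_Pp[OF n_ge_4 n_le_N] keys eq]) auto
  then have "msubst (\<lambda>a. mvar (Inl a)) (monom_subst ?\<alpha> m - monom_subst ?\<alpha> m') \<in> ?Id"
    by (intro ideal_gen_base) blast
  then have "msubst (\<lambda>a. mvar (Inl a)) (monom_subst ?\<alpha> m) - msubst (\<lambda>a. mvar (Inl a)) (monom_subst ?\<alpha> m')
      \<in> ?Id"
    by (simp add: msubst_diff)
  moreover have "monom_subst ?\<beta> m - monom_subst ?\<beta> m' \<in> IG (Pn_V n) (Pn_E n) (Pn_C n)"
    using n_le_N by (intro restricted_binomial_in_IG[OF N_ge_4 Pn_E_subset_CN_E[OF n_le_N] _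
        CN_C_split(2) imset_mono_Pn[OF n_ge_4 n_le_N] keys eq]) auto
  then have "msubst (\<lambda>b. mvar (Inr b)) (monom_subst ?\<beta> m - monom_subst ?\<beta> m') \<in> ?Id"
    by (intro ideal_gen_base) blast
  then have "msubst (\<lambda>b. mvar (Inr b)) (monom_subst ?\<beta> m) - msubst (\<lambda>b. mvar (Inr b)) (monom_subst ?\<beta> m')
      \<in> ?Id"
    by (simp add: msubst_diff)
  moreover have "?\<chi> k = msubst (\<lambda>a. mvar (Inl a)) (monom_subst ?\<alpha> k) * msubst (\<lambda>b. mvar (Inr b)) (monom_subst ?\<beta> k)"
    for k
    by (simp add: monom_subst_mult_distrib msubst_monom_subst)
  ultimately show ?thesis
    by (simp add: ideal_gen_mult_diff)
qed

lemma IG_CN_rename_subset_fiber_prod: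
  "msubst (\<lambda>S. mvar (S \<inter> ({n..N} \<union> {1}), S \<inter> {2..n-1}))
     ` (IG (CN_V N) (CN_E N) (CN_C N) :: (nat set, 'k::field) mpoly set)
   \<subseteq> fiber_prod (Qmn n N) (IG (Pp_V n N) (Pp_E n N) (Pp_C n N)) (IG (Pn_V n) (Pn_E n) (Pn_C n))"
proof
  fix x :: "(nat set \<times> nat set, 'k) mpoly"
  assume "x \<in> msubst (\<lambda>S. mvar (S \<inter> ({n..N} \<union> {1}), S \<inter> {2..n-1})) ` IG (CN_V N) (CN_E N) (CN_C N)"
  then obtain p where p: "p \<in> polys_in (CN_C N)" "msubst (imset_mono (CN_V N) (CN_E N)) p = 0"
    and x: "x = msubst (\<lambda>S. mvar (S \<inter> ({n..N} \<union> {1}), S \<inter> {2..n-1})) p"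
    unfolding IG_def by blast
  have "x \<in> polys_in (Qmn n N)"
    unfolding x using p(1) CN_C_split(3) by (intro polys_in_msubst polys_in_mvar)
  moreover have "msubst (\<lambda>S. mvar (Inl (S \<inter> ({n..N} \<union> {1}))) * mvar (Inr (S \<inter> {2..n-1}))) p
      \<in> ideal_gen (msubst (\<lambda>a. mvar (Inl a)) ` IG (Pp_V n N) (Pp_E n N) (Pp_C n N)
           \<union> msubst (\<lambda>b. mvar (Inr b)) ` IG (Pn_V n) (Pn_E n) (Pn_C n))"
  proof (rule msubst_monomial_kernel_into_ideal[OF _ fiber_binomial_in_ideal p])
    show "\<exists>e. imset_mono (CN_V N) (CN_E N) S = Poly_Mapping.single e (1::'k)" if "S \<in> CN_C N" for S
      using imset_mono_CN[OF N_ge_4 that] set_monom_eq_single by metis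
  qed
  ultimately show "x \<in> fiber_prod (Qmn n N) (IG (Pp_V n N) (Pp_E n N) (Pp_C n N)) (IG (Pn_V n) (Pn_E n) (Pn_C n))"
    unfolding fiber_prod_def x by (simp add: msubst_msubst)
qed

text \<open>x_a carries the cycle edges and y_b only the collider triples, so that x_a y_b goes to
  the imset monomial of the class a \<union> b of C_N.\<close>

definition cut_subst :: "nat set + nat set \<Rightarrow> (nat set, 'k::comm_semiring_1) mpoly" where
  "cut_subst = case_sum (\<lambda>a. set_monom (CN_E N \<union> cyc_triple N ` a)) (\<lambda>b. set_monom (cyc_triple N ` b))"

lemma cut_subst_fiber_var:
  assumes Q: "(a, b) \<in> Qmn n N"
  shows "msubst cut_subst (mvar (Inl a) * mvar (Inr b))
    = (imset_mono (CN_V N) (CN_E N) (a \<union> b) :: (nat set, 'k::comm_semiring_1) mpoly)"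
proof -
  note ab = Qmn_join[OF Q]
  have "(CN_E N \<union> cyc_triple N ` a) \<inter> cyc_triple N ` b = {}"
  proof -
    have "cyc_triple N k \<notin> CN_E N \<union> cyc_triple N ` a" if "k \<in> b" for k
      using that ab(4-6) cyc_triple_notin_CN_E[OF N_ge_4]
        inj_on_image_mem_iff[OF inj_on_cyc_triple[OF N_ge_4], of k a]
      by blast
    then show ?thesis
      by blast
  qed
  then have "msubst cut_subst (mvar (Inl a) * mvar (Inr b))
      = (set_monom (CN_E N \<union> cyc_triple N ` a \<union> cyc_triple N ` b) :: (nat set, 'k) mpoly)"
    using finite_cycle_family[OF order.refl ab(5)] finite_subset[OF ab(6)]
    by (simp add: msubst_mult cut_subst_def set_monom_union)
  then show ?thesis
    by (simp add: imset_mono_CN[OF N_ge_4 ab(1)] image_Un Un_assoc)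
qed

lemma cut_subst_kills_IG_Pp:
  assumes "i \<in> IG (Pp_V n N) (Pp_E n N) (Pp_C n N)"
  shows "msubst cut_subst (msubst (\<lambda>a. mvar (Inl a)) i) = (0 :: (nat set, 'k::field) mpoly)"
proof -
  have "msubst (\<lambda>a. set_monom (CN_E N \<union> cyc_triple N ` a)) i = (0 :: (nat set, 'k) mpoly)"
  proof (rule msubst_set_monom_kernel_subset[where \<sigma> = "imset_mono (Pp_V n N) (Pp_E n N)"
        and H = "\<lambda>a. CN_E N \<union> cyc_triple N ` a" and G = "\<lambda>a. Pp_E n N \<union> cyc_triple N ` a"])
    fix a
    assume a: "a \<in> Pp_C n N"
    show "finite (CN_E N \<union> cyc_triple N ` a)"
      using order.refl Pp_C_subset[OF a] by (rule finite_cycle_family)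
    show "finite (Pp_E n N \<union> cyc_triple N ` a)"
      using Pp_E_subset_CN_E[OF n_ge_4 n_le_N] Pp_C_subset[OF a] by (rule finite_cycle_family)
    show "imset_mono (Pp_V n N) (Pp_E n N) a = set_monom (Pp_E n N \<union> cyc_triple N ` a)"
      using n_ge_4 n_le_N a by (rule imset_mono_Pp)
  next
    show "rows_among (Pp_C n N) (\<lambda>a. CN_E N \<union> cyc_triple N ` a) (\<lambda>a. Pp_E n N \<union> cyc_triple N ` a)"
      using Pp_E_subset_CN_E[OF n_ge_4 n_le_N] by (rule rows_among_extend[where e = "{1, 2}"])
        (simp add: Pp_E_def)
  qed (use assms in \<open>simp_all add: IG_def\<close>)
  then show ?thesis
    by (simp add: msubst_msubst cut_subst_def)
qed

lemma cut_subst_kills_IG_Pn: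
  assumes "j \<in> IG (Pn_V n) (Pn_E n) (Pn_C n)"
  shows "msubst cut_subst (msubst (\<lambda>b. mvar (Inr b)) j) = (0 :: (nat set, 'k::field) mpoly)"
proof -
  have "msubst (\<lambda>b. set_monom (cyc_triple N ` b)) j = (0 :: (nat set, 'k) mpoly)"
  proof (rule msubst_set_monom_kernel_subset[where \<sigma> = "imset_mono (Pn_V n) (Pn_E n)"
        and H = "\<lambda>b. cyc_triple N ` b" and G = "\<lambda>b. Pn_E n \<union> cyc_triple N ` b"])
    fix b
    assume b: "b \<in> Pn_C n"
    show "finite (cyc_triple N ` b)"
      using finite_subset[OF Pn_C_subset[OF b]] by simp
    show "finite (Pn_E n \<union> cyc_triple N ` b)"
      using Pn_E_subset_CN_E[OF n_le_N] Pn_C_subset[OF b] by (rule finite_cycle_family)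
    show "imset_mono (Pn_V n) (Pn_E n) b = set_monom (Pn_E n \<union> cyc_triple N ` b)"
      using n_ge_4 n_le_N b by (rule imset_mono_Pn)
  next
    show "rows_among (Pn_C n) (\<lambda>b. cyc_triple N ` b) (\<lambda>b. Pn_E n \<union> cyc_triple N ` b)"
      using N_ge_4 Pn_E_subset_CN_E[OF n_le_N] Pn_C_subset by (rule rows_among_drop)
  qed (use assms in \<open>simp_all add: IG_def\<close>)
  then show ?thesis
    by (simp add: msubst_msubst cut_subst_def)
qed

lemma rename_join_eq:
  assumes p: "p \<in> polys_in (Qmn n N)"
  shows "msubst (\<lambda>S. mvar (S \<inter> ({n..N} \<union> {1}), S \<inter> {2..n-1}))
           (msubst (\<lambda>v. mvar (fst v \<union> snd v)) p) = p"
proof -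
  have "msubst (\<lambda>S. mvar (S \<inter> ({n..N} \<union> {1}), S \<inter> {2..n-1})) (msubst (\<lambda>v. mvar (fst v \<union> snd v)) p)
      = msubst mvar p"
    unfolding msubst_msubst
  proof (rule msubst_cong)
    fix m v
    assume "m \<in> Poly_Mapping.keys p" "v \<in> Poly_Mapping.keys m"
    moreover obtain a b where v: "v = (a, b)"
      by fastforce
    ultimately have "(a, b) \<in> Qmn n N"
      using p unfolding polys_in_def by blast
    then show "msubst (\<lambda>S. mvar (S \<inter> ({n..N} \<union> {1}), S \<inter> {2..n-1})) (mvar (fst v \<union> snd v)) = mvar v"
      unfolding v by (simp only: fst_conv snd_conv msubst_mvar Qmn_join(2,3))
  qed
  then show ?thesis
    by simp
qed

lemma join_fiber_prod_in_IG_CN: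
  assumes "p \<in> fiber_prod (Qmn n N) (IG (Pp_V n N) (Pp_E n N) (Pp_C n N)) (IG (Pn_V n) (Pn_E n) (Pn_C n))"
  shows "msubst (\<lambda>v. mvar (fst v \<union> snd v)) p \<in> (IG (CN_V N) (CN_E N) (CN_C N) :: (nat set, 'k::field) mpoly set)"
proof -
  have p: "p \<in> polys_in (Qmn n N)"
    and ideal: "msubst (\<lambda>(a, b). mvar (Inl a) * mvar (Inr b)) p
      \<in> ideal_gen (msubst (\<lambda>a. mvar (Inl a)) ` IG (Pp_V n N) (Pp_E n N) (Pp_C n N)
           \<union> msubst (\<lambda>b. mvar (Inr b)) ` IG (Pn_V n) (Pn_E n) (Pn_C n))"
    using assms unfolding fiber_prod_def by auto
  have "msubst (imset_mono (CN_V N) (CN_E N)) (msubst (\<lambda>v. mvar (fst v \<union> snd v)) p)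
      = msubst cut_subst (msubst (\<lambda>(a, b). mvar (Inl a) * mvar (Inr b)) p)"
    unfolding msubst_msubst
  proof (rule msubst_cong)
    fix m v
    assume "m \<in> Poly_Mapping.keys p" "v \<in> Poly_Mapping.keys m"
    then have "v \<in> Qmn n N"
      using p unfolding polys_in_def by blast
    then show "msubst (imset_mono (CN_V N) (CN_E N)) (mvar (fst v \<union> snd v))
        = msubst cut_subst ((\<lambda>(a, b). mvar (Inl a) * mvar (Inr b)) v)"
      by (cases v) (simp add: cut_subst_fiber_var)
  qed
  also have "\<dots> = 0"
  proof (rule msubst_ideal_gen_eq_0[OF _ ideal])
    fix g
    assume "g \<in> msubst (\<lambda>a. mvar (Inl a)) ` IG (Pp_V n N) (Pp_E n N) (Pp_C n N)
      \<union> msubst (\<lambda>b. mvar (Inr b)) ` IG (Pn_V n) (Pn_E n) (Pn_C n)"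
    then show "msubst cut_subst g = 0"
      using cut_subst_kills_IG_Pp cut_subst_kills_IG_Pn by blast
  qed
  finally have "msubst (imset_mono (CN_V N) (CN_E N)) (msubst (\<lambda>v. mvar (fst v \<union> snd v)) p) = 0" .
  moreover have "msubst (\<lambda>v. mvar (fst v \<union> snd v)) p \<in> polys_in (CN_C N)"
    using p Qmn_join(1) by (intro polys_in_msubst polys_in_mvar) auto
  ultimately show ?thesis
    unfolding IG_def by simp
qed

lemma fiber_prod_subset_IG_CN_rename:
  "fiber_prod (Qmn n N) (IG (Pp_V n N) (Pp_E n N) (Pp_C n N)) (IG (Pn_V n) (Pn_E n) (Pn_C n))
   \<subseteq> msubst (\<lambda>S. mvar (S \<inter> ({n..N} \<union> {1}), S \<inter> {2..n-1}))
       ` (IG (CN_V N) (CN_E N) (CN_C N) :: (nat set, 'k::field) mpoly set)"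
proof
  fix p :: "(nat set \<times> nat set, 'k) mpoly"
  assume p: "p \<in> fiber_prod (Qmn n N) (IG (Pp_V n N) (Pp_E n N) (Pp_C n N)) (IG (Pn_V n) (Pn_E n) (Pn_C n))"
  then have "p \<in> polys_in (Qmn n N)"
    by (simp add: fiber_prod_def)
  then have "p = msubst (\<lambda>S. mvar (S \<inter> ({n..N} \<union> {1}), S \<inter> {2..n-1}))
      (msubst (\<lambda>v. mvar (fst v \<union> snd v)) p)"
    by (rule rename_join_eq[symmetric])
  with join_fiber_prod_in_IG_CN[OF p]
  show "p \<in> msubst (\<lambda>S. mvar (S \<inter> ({n..N} \<union> {1}), S \<inter> {2..n-1})) ` IG (CN_V N) (CN_E N) (CN_C N)"
    by (rule rev_image_eqI)
qed

end

theorem theorem5p1: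
  fixes m n N :: nat
  assumes "m \<ge> 4" and "n \<ge> 4" and "N = n + m - 4"
  shows "msubst (\<lambda>S. mvar (S \<inter> ({n..N} \<union> {1}), S \<inter> {2..n-1}))
            ` (IG (CN_V N) (CN_E N) (CN_C N) :: (nat set, 'k::field) mpoly set)
         = fiber_prod (Qmn n N) (IG (Pp_V n N) (Pp_E n N) (Pp_C n N)) (IG (Pn_V n) (Pn_E n) (Pn_C n))"
proof -
  interpret cycle_cut n N
    using assms by unfold_locales auto
  show ?thesis
    using IG_CN_rename_subset_fiber_prod fiber_prod_subset_IG_CN_rename by (rule equalityI)
qed

end
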